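(* Let $n\in\mathbb N$ with $n\ge 10$. Then $\mathrm{ex}(2n-7;T_n^3)=n^2-8n+22$.
   Context: All graphs are finite simple graphs. For a graph $L$, $\mathrm{ex}(p;L)$ denotes the maximum number of edges in a graph on $p$ vertices that contains no subgraph isomorphic to $L$. For $n\ge 6$, $T_n^3$ is the tree on vertex set $\{v_0,\ldots,v_{n-1}\}$ with edge set $\{v_0v_1,v_0v_2,\ldots,v_0v_{n-4},\ v_1v_{n-3},\ v_1v_{n-2},\ v_1v_{n-1}\}$. *)

theory Defs
  imports Main
begin

definition simple_graph :: "'a set \<Rightarrow> 'a set set \<Rightarrow> bool" where
  "simple_graph V E \<longleftrightarrow> finite V \<and> (\<forall>e\<in>E. e \<subseteq> V \<and> card e = 2)"

definition contains_copy ::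
  "'b set \<Rightarrow> 'b set set \<Rightarrow> 'a set \<Rightarrow> 'a set set \<Rightarrow> bool" where
  "contains_copy VL EL V E \<longleftrightarrow>
     (\<exists>f. inj_on f VL \<and> f ` VL \<subseteq> V \<and> (\<forall>e\<in>EL. f ` e \<in> E))"

text \<open>Turan number ex(p;L): maximum number of edges of an L-free graph on p vertices
  (vertex set taken to be {0..<p}, which is w.l.o.g. up to isomorphism).\<close>

definition ex_num :: "nat \<Rightarrow> 'b set \<Rightarrow> 'b set set \<Rightarrow> nat" where
  "ex_num p VL EL = Max {card E | E. simple_graph {0..<p} E \<and> \<not> contains_copy VL EL {0..<p} E}"

text \<open>The tree T_n^3 on vertices {0..<n} (v_i = i).\<close>

definition T3_edges :: "nat \<Rightarrow> nat set set" where
  "T3_edges n = {{0, i} | i. 1 \<le> i \<and> i \<le> n - 4} \<union> {{1, n - 3}, {1, n - 2}, {1, n - 1}}"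

end

theory Submission
  imports Defs
begin

(* Lower bound: two disjoint cliques on n - 1 and n - 6 vertices contain no copy of the
   connected n-vertex tree T_n^3 and have (n-1 choose 2) + (n-6 choose 2) = (n-4)^2 + 6 edges.

   Upper bound: put m = n - 4, so the host graph has 2m + 1 vertices.  If an edge uv has
   deg u >= m and deg v >= 4, then N(u) and N(v) cannot jointly supply the n - 2 leaves of
   a copy of T_n^3 with centre edge uv; this yields the local bound
       deg u + |N(v) - N[u]| <= m + 2.
   From the local bound alone, a double counting argument around a vertex u of maximum
   degree D, split into C = N[u] and W = V - C, gives a degree sum of at most 2m^2 + 12;
   the argument is a case analysis on D (D < m, D = m, D = m + 1, D = m + 2, D >= m + 3). *)

definition nbhd :: "'a set set \<Rightarrow> 'a \<Rightarrow> 'a set" where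
  "nbhd E v = {w. {v, w} \<in> E}"

abbreviation degree :: "'a set set \<Rightarrow> 'a \<Rightarrow> nat" where
  "degree E v \<equiv> card (nbhd E v)"

lemma nbhd_sym: "w \<in> nbhd E v \<longleftrightarrow> v \<in> nbhd E w"
  by (simp add: nbhd_def insert_commute)

locale graph =
  fixes V :: "'a set" and E :: "'a set set"
  assumes simple: "simple_graph V E"
begin

lemma finite_V: "finite V"
  using simple by (simp add: simple_graph_def)

lemma edge_subset: "e \<in> E \<Longrightarrow> e \<subseteq> V" and edge_card: "e \<in> E \<Longrightarrow> card e = 2"
  using simple by (auto simp: simple_graph_def)

lemma finite_E: "finite E"
proof -
  have "E \<subseteq> Pow V" using edge_subset by auto
  then show ?thesis using finite_V by (meson finite_Pow_iff finite_subset)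
qed

lemma nbhd_subset: "nbhd E v \<subseteq> V"
  using edge_subset by (auto simp: nbhd_def)

lemma finite_nbhd: "finite (nbhd E v)"
  using nbhd_subset finite_V by (rule finite_subset)

lemma not_in_nbhd: "v \<notin> nbhd E v"
  using edge_card[of "{v}"] by (auto simp: nbhd_def)

lemma degree_incident: "degree E v = card {e\<in>E. v \<in> e}"
proof -
  have "bij_betw (\<lambda>w. {v, w}) (nbhd E v) {e\<in>E. v \<in> e}"
  proof (rule bij_betwI')
    fix x y assume "x \<in> nbhd E v" "y \<in> nbhd E v"
    then show "({v, x} = {v, y}) = (x = y)"
      using not_in_nbhd by (metis doubleton_eq_iff)
  next
    fix x assume "x \<in> nbhd E v"
    then show "{v, x} \<in> {e\<in>E. v \<in> e}" by (simp add: nbhd_def)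
  next
    fix e assume e: "e \<in> {e\<in>E. v \<in> e}"
    then have "card e = 2" using edge_card by simp
    then obtain a b where "e = {a, b}" "a \<noteq> b" by (meson card_2_iff)
    with e obtain w where "e = {v, w}" by auto
    then show "\<exists>x\<in>nbhd E v. e = {v, x}" using e by (auto simp: nbhd_def)
  qed
  then show ?thesis by (rule bij_betw_same_card)
qed

lemma degree_sum: "(\<Sum>v\<in>V. degree E v) = 2 * card E"
proof -
  have "(\<Sum>v\<in>V. card {e\<in>E. v \<in> e}) = 2 * card E"
  proof (rule sum_multicount[OF finite_V finite_E], intro ballI)
    fix e assume "e \<in> E"
    then have "{v\<in>V. v \<in> e} = e" using edge_subset by auto
    then show "card {v\<in>V. v \<in> e} = 2" using edge_card \<open>e \<in> E\<close> by simp
  qed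
  then show ?thesis by (simp add: degree_incident)
qed

lemma cross_edges_sym:
  assumes "A \<subseteq> V" "B \<subseteq> V"
  shows "(\<Sum>a\<in>A. card (nbhd E a \<inter> B)) = (\<Sum>b\<in>B. card (nbhd E b \<inter> A))"
proof -
  have fin: "finite A" "finite B" using assms finite_V finite_subset by auto
  have "(\<Sum>a\<in>A. card (nbhd E a \<inter> B)) = (\<Sum>a\<in>A. card {b\<in>B. b \<in> nbhd E a})"
    by (intro sum.cong refl arg_cong[where f=card]) auto
  also have "\<dots> = (\<Sum>b\<in>B. card {a\<in>A. b \<in> nbhd E a})"
    by (rule sum_multicount_gen[OF fin]) auto
  also have "\<dots> = (\<Sum>b\<in>B. card (nbhd E b \<inter> A))"
    by (intro sum.cong refl arg_cong[where f=card]) (auto simp: nbhd_sym)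
  finally show ?thesis .
qed

lemma degree_split: "degree E v = card (nbhd E v \<inter> A) + card (nbhd E v \<inter> (V - A))"
proof -
  have "nbhd E v - A = nbhd E v \<inter> (V - A)" using nbhd_subset by auto
  then show ?thesis using card_Int_Diff[OF finite_nbhd, of v A] by simp
qed

end

text \<open>From a set \<open>B\<close> of size at least 3 one can pick three elements while keeping
  \<open>k\<close> elements of \<open>A\<close>, provided \<open>|A \<union> B| \<ge> k + 3\<close>: take elements of \<open>B - A\<close> first.\<close>

lemma choose_three_keeping:
  assumes fin: "finite A" "finite B" and B3: "3 \<le> card B"
    and union: "k + 3 \<le> card (A \<union> B)" and Ak: "k \<le> card A"
  obtains B' where "B' \<subseteq> B" "card B' = 3" "k \<le> card (A - B')"
proof (cases "3 \<le> card (B - A)")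
  case True
  then obtain B' where B': "B' \<subseteq> B - A" "card B' = 3" by (meson obtain_subset_with_card_n)
  then have "B' \<subseteq> B" "A - B' = A" by auto
  then show ?thesis using that B'(2) Ak by simp
next
  case False
  define k0 where "k0 = card (B - A)"
  have "card (A \<union> B) = card A + k0"
    unfolding k0_def using fin card_Un_disjoint[of A "B - A"] by (simp add: Un_Diff_cancel)
  moreover have "card (B \<inter> A) + k0 = card B"
    unfolding k0_def using card_Int_Diff[OF fin(2), of A] by simp
  ultimately have "3 - k0 \<le> card (B \<inter> A)" using B3 by linarith
  then obtain X where X: "X \<subseteq> B \<inter> A" "card X = 3 - k0" "finite X"
    by (meson obtain_subset_with_card_n)
  define B' where "B' = (B - A) \<union> X"
  have "card B' = k0 + (3 - k0)"
    unfolding B'_def using X fin by (subst card_Un_disjoint) (auto simp: k0_def)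
  then have "card B' = 3" using False k0_def by linarith
  moreover have "A - B' = A - X" unfolding B'_def by auto
  then have "card (A - B') = card A - (3 - k0)" using X by (simp add: card_Diff_subset)
  then have "k \<le> card (A - B')" using \<open>card (A \<union> B) = card A + k0\<close> union False k0_def by linarith
  moreover have "B' \<subseteq> B" unfolding B'_def using X by auto
  ultimately show ?thesis using that by blast
qed

context graph
begin

text \<open>A copy of \<open>T\<^sub>n\<^sup>3\<close>: the edge \<open>uv\<close> is the edge \<open>v\<^sub>0v\<^sub>1\<close>, the \<open>n - 5\<close> further leaves at
  \<open>v\<^sub>0\<close> come from \<open>A \<subseteq> N(u)\<close> and the three leaves at \<open>v\<^sub>1\<close> from \<open>B \<subseteq> N(v)\<close>.\<close>

lemma T3_copy:
  assumes n: "6 \<le> n" and uv: "{u, v} \<in> E"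
    and A: "A \<subseteq> nbhd E u" "card A = n - 5" and B: "B \<subseteq> nbhd E v" "card B = 3"
    and disj: "A \<inter> B = {}" "v \<notin> A" "u \<notin> B"
  shows "contains_copy {0..<n} (T3_edges n) V E"
proof -
  have finA: "finite A" using A(1) finite_nbhd by (rule finite_subset)
  have finB: "finite B" using B(1) finite_nbhd by (rule finite_subset)
  obtain as where as: "set as = A" "distinct as" using finite_distinct_list[OF finA] by blast
  obtain bs where bs: "set bs = B" "distinct bs" using finite_distinct_list[OF finB] by blast
  have len: "length as = n - 5" "length bs = 3"
    using distinct_card[OF as(2)] distinct_card[OF bs(2)] as(1) bs(1) A(2) B(2) by simp_all
  have "u \<noteq> v" "u \<in> V" "v \<in> V" using uv edge_card[OF uv] edge_subset[OF uv] by auto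
  have "u \<notin> A" "v \<notin> B" using A B not_in_nbhd by auto
  define xs where "xs = u # v # as @ bs"
  have dist: "distinct xs" and len_xs: "length xs = n"
    using as bs len disj n \<open>u \<noteq> v\<close> \<open>u \<notin> A\<close> \<open>v \<notin> B\<close> by (auto simp: xs_def)
  have tail: "xs ! i = (as @ bs) ! (i - 2)" if "2 \<le> i" for i
    using that by (simp add: xs_def nth_Cons' numeral_2_eq_2)
  have in_A: "xs ! i \<in> A" if "2 \<le> i" "i \<le> n - 4" for i
  proof -
    have "i - 2 < length as" using that len n by linarith
    then show ?thesis using tail[OF that(1)] as(1) nth_mem by (fastforce simp: nth_append)
  qed
  have in_B: "xs ! i \<in> B" if "n - 3 \<le> i" "i < n" for i
  proof -
    have "\<not> i - 2 < length as" "i - 2 - length as < length bs" using that len n by linarith+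
    then show ?thesis using tail[of i] that n bs(1) nth_mem by (fastforce simp: nth_append)
  qed
  have leaf_u: "{u, xs ! i} \<in> E" if "1 \<le> i" "i \<le> n - 4" for i
  proof (cases "i = 1")
    case True then show ?thesis using uv by (simp add: xs_def)
  next
    case False then show ?thesis using in_A[of i] that A by (auto simp: nbhd_def)
  qed
  have leaf_v: "{v, xs ! i} \<in> E" if "n - 3 \<le> i" "i < n" for i
    using in_B[OF that] B by (auto simp: nbhd_def)
  have "inj_on ((!) xs) {0..<n}" using dist len_xs by (intro inj_on_nth) auto
  moreover have "(!) xs ` {0..<n} \<subseteq> V"
  proof -
    have "set xs \<subseteq> V" using as bs A B nbhd_subset \<open>u \<in> V\<close> \<open>v \<in> V\<close> by (auto simp: xs_def)
    then show ?thesis using len_xs nth_mem by fastforce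
  qed
  moreover have "(!) xs ` e \<in> E" if "e \<in> T3_edges n" for e
  proof -
    have "xs ! 0 = u" "xs ! 1 = v" by (simp_all add: xs_def)
    then show ?thesis using that n leaf_u leaf_v by (auto simp: T3_edges_def)
  qed
  ultimately show ?thesis unfolding contains_copy_def by blast
qed

text \<open>Local consequence of \<open>T\<^sub>n\<^sup>3\<close>-freeness: if \<open>u\<close> has degree at least \<open>n - 4\<close> and its
  neighbour \<open>v\<close> has degree at least 4, then \<open>v\<close> has few neighbours outside \<open>N[u]\<close>, since
  otherwise \<open>N(u)\<close> and \<open>N(v)\<close> together supply the \<open>n - 2\<close> leaves of a copy.\<close>

lemma T3_free_local_bound:
  assumes n: "6 \<le> n" and free: "\<not> contains_copy {0..<n} (T3_edges n) V E"
    and uv: "{u, v} \<in> E" and du: "n - 4 \<le> degree E u" and dv: "4 \<le> degree E v"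
  shows "degree E u + card (nbhd E v - nbhd E u - {u}) \<le> n - 2"
proof (rule ccontr)
  assume many: "\<not> ?thesis"
  define A0 where "A0 = nbhd E u - {v}"
  define B0 where "B0 = nbhd E v - {u}"
  have fin: "finite A0" "finite B0" using finite_nbhd by (simp_all add: A0_def B0_def)
  have "v \<in> nbhd E u" "u \<in> nbhd E v" using uv by (auto simp: nbhd_def insert_commute)
  then have cA0: "card A0 = degree E u - 1" and cB0: "card B0 = degree E v - 1"
    using finite_nbhd by (simp_all add: A0_def B0_def)
  have "A0 \<union> (nbhd E v - nbhd E u - {u}) \<subseteq> A0 \<union> B0" by (auto simp: A0_def B0_def)
  then have "card (A0 \<union> (nbhd E v - nbhd E u - {u})) \<le> card (A0 \<union> B0)"
    using fin by (intro card_mono) auto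
  moreover have "card (A0 \<union> (nbhd E v - nbhd E u - {u})) = card A0 + card (nbhd E v - nbhd E u - {u})"
    using finite_nbhd by (intro card_Un_disjoint) (auto simp: A0_def)
  ultimately have union: "(n - 5) + 3 \<le> card (A0 \<union> B0)" using many cA0 n du by linarith
  have "3 \<le> card B0" "n - 5 \<le> card A0" using cA0 cB0 du dv by linarith+
  then obtain B where B: "B \<subseteq> B0" "card B = 3" "n - 5 \<le> card (A0 - B)"
    using choose_three_keeping[OF fin _ union] by blast
  obtain A where A: "A \<subseteq> A0 - B" "card A = n - 5"
    using B(3) by (meson obtain_subset_with_card_n)
  have "contains_copy {0..<n} (T3_edges n) V E"
    by (rule T3_copy[OF n uv, of A B]) (use A B in \<open>auto simp: A0_def B0_def\<close>)
  then show False using free by contradiction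
qed

end

lemma sum_diff_le: "(\<Sum>x\<in>F. f x - k) \<le> (\<Sum>x\<in>F. f x) - (k::nat)"
proof (induction F rule: infinite_finite_induct)
  case (insert a F)
  then show ?case by (simp add: le_diff_conv)
qed simp_all

lemma large_case_arith:
  fixes m d w :: nat
  assumes "6 \<le> m" "d + w = 2 * m" "w + 3 \<le> m"
  shows "6 * d + w * (w - 1) \<le> 2 * m * m + 12"
proof -
  obtain j where j: "m = w + 3 + j" using assms(3) by (metis add.commute le_iff_add)
  then have d: "d = w + 6 + 2 * j" using assms(2) by linarith
  show ?thesis
  proof (cases w)
    case 0
    then have "9 \<le> j * j" using j assms(1) mult_le_mono[of 3 j 3 j] by simp
    then show ?thesis using 0 j d by (simp add: algebra_simps)
  next
    case (Suc k)
    then show ?thesis using j d by (simp add: algebra_simps)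
  qed
qed

text \<open>A graph on \<open>2m + 1\<close> vertices satisfying the local bound derived from
  \<open>T\<^sub>n\<^sup>3\<close>-freeness (with \<open>m = n - 4\<close>).\<close>

locale local_bound_graph = graph +
  fixes m :: nat
  assumes card_V: "card V = 2 * m + 1" and m_ge: "6 \<le> m"
    and local_bound: "\<And>u v. {u, v} \<in> E \<Longrightarrow> m \<le> degree E u \<Longrightarrow> 4 \<le> degree E v \<Longrightarrow>
      degree E u + card (nbhd E v - nbhd E u - {u}) \<le> m + 2"

locale max_degree_vertex = local_bound_graph +
  fixes u
  assumes u_in_V: "u \<in> V" and u_max: "\<And>z. z \<in> V \<Longrightarrow> degree E z \<le> degree E u"
begin

abbreviation D :: nat where "D \<equiv> degree E u"

definition C :: "'a set" where "C = insert u (nbhd E u)"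

definition W :: "'a set" where "W = V - C"

lemma C_subset: "C \<subseteq> V" and W_subset: "W \<subseteq> V"
  using u_in_V nbhd_subset by (auto simp: C_def W_def)

lemma finite_C: "finite C" and finite_W: "finite W"
  using C_subset W_subset finite_V finite_subset by auto

lemma card_C: "card C = D + 1"
  using not_in_nbhd finite_nbhd by (simp add: C_def)

lemma card_W: "card W = 2 * m - D" and D_le: "D \<le> 2 * m"
proof -
  show "card W = 2 * m - D"
    using card_Diff_subset[OF finite_C C_subset] card_V card_C by (simp add: W_def)
  show "D \<le> 2 * m"
    using card_mono[OF finite_V C_subset] card_V card_C by simp
qed

lemma degree_le_D: "v \<in> C \<Longrightarrow> degree E v \<le> D"
  using u_max C_subset by blast

lemma sum_C: "(\<Sum>v\<in>C. f v) = f u + (\<Sum>v\<in>nbhd E u. f v)"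
  using not_in_nbhd finite_nbhd by (simp add: C_def)

lemma sum_V: "(\<Sum>v\<in>V. degree E v) = (\<Sum>v\<in>C. degree E v) + (\<Sum>w\<in>W. degree E w)"
  using sum.subset_diff[OF C_subset finite_V] by (simp add: W_def add.commute)

lemma degree_C_W: "degree E z = card (nbhd E z \<inter> C) + card (nbhd E z \<inter> W)"
  unfolding W_def by (rule degree_split)

lemma W_count: "A \<subseteq> V \<Longrightarrow> (\<Sum>w\<in>W. card (nbhd E w \<inter> A)) = (\<Sum>a\<in>A. card (nbhd E a \<inter> W))"
  using cross_edges_sym[OF W_subset] by blast

lemma u_to_W: "nbhd E u \<inter> W = {}"
  by (auto simp: W_def C_def)

text \<open>A neighbour \<open>v\<close> of \<open>u\<close> has \<open>u\<close> as a neighbour outside \<open>W\<close>.\<close>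

lemma nbhd_to_W_le: "v \<in> nbhd E u \<Longrightarrow> card (nbhd E v \<inter> W) \<le> degree E v - 1"
proof -
  assume "v \<in> nbhd E u"
  have "card (nbhd E v \<inter> W) \<le> card (nbhd E v - {u})"
    by (rule card_mono) (auto simp: W_def C_def finite_nbhd)
  also have "\<dots> = degree E v - 1"
    using \<open>v \<in> nbhd E u\<close> by (simp add: nbhd_sym finite_nbhd)
  finally show ?thesis .
qed

text \<open>The local bound at the edge \<open>uv\<close>, since \<open>N(v) \<inter> W = N(v) - N[u]\<close>.\<close>

lemma nbhd_to_W_bound:
  assumes "v \<in> nbhd E u" "4 \<le> degree E v" "m \<le> D"
  shows "D + card (nbhd E v \<inter> W) \<le> m + 2"
proof -
  have "nbhd E v \<inter> W = nbhd E v - nbhd E u - {u}" using nbhd_subset by (auto simp: W_def C_def)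
  then show ?thesis using local_bound[of u v] assms by (simp add: nbhd_def)
qed

lemma W_to_W_le: "w \<in> W \<Longrightarrow> card (nbhd E w \<inter> W) \<le> card W - 1"
proof -
  assume "w \<in> W"
  moreover have "nbhd E w \<inter> W \<subseteq> W - {w}" using not_in_nbhd by auto
  ultimately show ?thesis using finite_W card_mono[of "W - {w}"] by (simp add: card_Diff_singleton)
qed

lemma degree_sum_via_C:
  "(\<Sum>v\<in>V. degree E v) \<le> (\<Sum>v\<in>C. degree E v + card (nbhd E v \<inter> W)) + card W * (card W - 1)"
proof -
  have "(\<Sum>w\<in>W. degree E w) = (\<Sum>w\<in>W. card (nbhd E w \<inter> C)) + (\<Sum>w\<in>W. card (nbhd E w \<inter> W))"
    using degree_C_W by (simp add: sum.distrib)
  also have "(\<Sum>w\<in>W. card (nbhd E w \<inter> W)) \<le> card W * (card W - 1)"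
    using sum_bounded_above[of W "\<lambda>w. card (nbhd E w \<inter> W)"] W_to_W_le by simp
  finally show ?thesis using sum_V W_count[OF C_subset] by (simp add: sum.distrib)
qed

text \<open>Case \<open>D \<ge> m + 3\<close>: every neighbour of \<open>u\<close> has degree at most 3.\<close>

lemma degree_sum_D_large:
  assumes D: "m + 3 \<le> D"
  shows "(\<Sum>v\<in>V. degree E v) \<le> 2 * m * m + 12"
proof -
  have "degree E v + card (nbhd E v \<inter> W) \<le> 5" if v: "v \<in> nbhd E u" for v
  proof -
    have "degree E v \<le> 3"
    proof (rule ccontr)
      assume "\<not> degree E v \<le> 3"
      then show False using nbhd_to_W_bound[OF v] D by simp
    qed
    then show ?thesis using nbhd_to_W_le[OF v] by linarith
  qed
  then have "(\<Sum>v\<in>nbhd E u. degree E v + card (nbhd E v \<inter> W)) \<le> D * 5"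
    using sum_bounded_above[of "nbhd E u" "\<lambda>v. degree E v + card (nbhd E v \<inter> W)" 5] by simp
  then have "(\<Sum>v\<in>C. degree E v + card (nbhd E v \<inter> W)) \<le> 6 * D"
    using sum_C[of "\<lambda>v. degree E v + card (nbhd E v \<inter> W)"] u_to_W by simp
  moreover have "6 * D + card W * (card W - 1) \<le> 2 * m * m + 12"
    using large_case_arith[OF m_ge, of D "card W"] card_W D_le D by simp
  ultimately show ?thesis using degree_sum_via_C by linarith
qed

text \<open>Case \<open>D = m + 2\<close>: a vertex of \<open>C\<close> has degree at most \<open>m + 2\<close> and, if it reaches \<open>W\<close>
  at all, degree at most 3.\<close>

lemma degree_sum_D_m2:
  assumes D: "D = m + 2"
  shows "(\<Sum>v\<in>V. degree E v) \<le> 2 * m * m + 12"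
proof -
  have "degree E v + card (nbhd E v \<inter> W) \<le> m + 2" if "v \<in> C" for v
  proof (cases "v = u")
    case True then show ?thesis using u_to_W D by simp
  next
    case False
    then have v: "v \<in> nbhd E u" using that by (simp add: C_def)
    show ?thesis
    proof (cases "4 \<le> degree E v")
      case True
      then have "card (nbhd E v \<inter> W) = 0" using nbhd_to_W_bound[OF v True] D by simp
      then show ?thesis using degree_le_D[OF that] D by simp
    next
      case False
      then show ?thesis using nbhd_to_W_le[OF v] m_ge by linarith
    qed
  qed
  then have "(\<Sum>v\<in>C. degree E v + card (nbhd E v \<inter> W)) \<le> card C * (m + 2)"
    using sum_bounded_above[of C "\<lambda>v. degree E v + card (nbhd E v \<inter> W)" "m + 2"] by simp
  also have "\<dots> = (m + 3) * (m + 2)" using card_C D by (simp add: algebra_simps)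
  finally have "(\<Sum>v\<in>C. degree E v + card (nbhd E v \<inter> W)) \<le> (m + 3) * (m + 2)" .
  moreover have "card W * (card W - 1) = (m - 2) * (m - 3)"
    using card_W D by (simp add: diff_diff_left)
  moreover have "(m + 3) * (m + 2) + (m - 2) * (m - 3) \<le> 2 * m * m + 12"
  proof -
    obtain k where "m = k + 6" using m_ge by (metis add.commute le_iff_add)
    then show ?thesis by (simp add: algebra_simps)
  qed
  ultimately show ?thesis using degree_sum_via_C by linarith
qed

definition C_high :: "'a set" where "C_high = {v \<in> C. m \<le> degree E v}"

lemma high_to_W:
  assumes D: "D = m + 1" and v: "v \<in> C_high"
  shows "card (nbhd E v \<inter> W) \<le> 1"
proof (cases "v = u")
  case True then show ?thesis using u_to_W by simp
next
  case False
  then have "v \<in> nbhd E u" "4 \<le> degree E v" using v m_ge by (auto simp: C_high_def C_def)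
  then show ?thesis using nbhd_to_W_bound D by fastforce
qed

text \<open>A low vertex of \<open>C\<close> either has degree at most 3 or at most one neighbour in \<open>W\<close>;
  either way its degree plus its number of \<open>W\<close>-neighbours is at most \<open>m + 1\<close>.\<close>

lemma C_vertex_D_m1:
  assumes D: "D = m + 1" and v: "v \<in> C"
  shows "degree E v + (if v \<in> C_high then 0 else card (nbhd E v \<inter> W)) \<le> m + 1"
proof (cases "v \<in> C_high")
  case True then show ?thesis using degree_le_D[OF v] D by simp
next
  case False
  then have low: "degree E v < m" using v by (simp add: C_high_def)
  then have "v \<in> nbhd E u" using v D by (auto simp: C_def)
  then have "card (nbhd E v \<inter> W) \<le> 1 \<or> degree E v \<le> 3"
    using nbhd_to_W_bound D by fastforce
  then show ?thesis using nbhd_to_W_le[OF \<open>v \<in> nbhd E u\<close>] low False m_ge by auto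
qed

text \<open>A vertex of \<open>W\<close> of degree at least 4 adjacent to a high vertex \<open>v\<close> of \<open>C\<close> is the only
  \<open>W\<close>-neighbour of \<open>v\<close>; the local bound at the edge \<open>vw\<close> then leaves it at most two
  neighbours in \<open>W\<close>.\<close>

lemma W_next_to_high:
  assumes D: "D = m + 1" and v: "v \<in> C_high" and w: "w \<in> W" "w \<in> nbhd E v"
    and dw: "4 \<le> degree E w"
  shows "card (nbhd E w \<inter> W) \<le> 2"
proof -
  have only_w: "z = w" if "z \<in> nbhd E v \<inter> W" for z
    using high_to_W[OF D v] that w finite_nbhd card_le_Suc0_iff_eq[of "nbhd E v \<inter> W"] by auto
  have "m \<le> degree E v" using v by (simp add: C_high_def)
  then have "card (nbhd E w - nbhd E v - {v}) \<le> 2"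
    using local_bound[of v w] w(2) dw by (simp add: nbhd_def)
  moreover have "nbhd E w \<inter> W \<subseteq> nbhd E w - nbhd E v - {v}"
    using only_w not_in_nbhd[of w] v by (auto simp: C_high_def W_def)
  then have "card (nbhd E w \<inter> W) \<le> card (nbhd E w - nbhd E v - {v})"
    using finite_nbhd by (intro card_mono) auto
  ultimately show ?thesis by linarith
qed

text \<open>Degree bound for a vertex of \<open>W\<close> when \<open>D = m + 1\<close>: it has at most \<open>m - 2\<close>
  neighbours in \<open>W\<close>, and only two if it has a high neighbour.\<close>

lemma W_vertex_D_m1:
  assumes D: "D = m + 1" and w: "w \<in> W"
  shows "degree E w \<le> (m - 2) + card (nbhd E w \<inter> (C - C_high))
                        + (card (nbhd E w \<inter> C_high) - (m - 4))"
proof -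
  have "nbhd E w \<inter> C = (nbhd E w \<inter> C_high) \<union> (nbhd E w \<inter> (C - C_high))"
    by (auto simp: C_high_def)
  moreover have "card (nbhd E w \<inter> C_high \<union> nbhd E w \<inter> (C - C_high))
      = card (nbhd E w \<inter> C_high) + card (nbhd E w \<inter> (C - C_high))"
    by (rule card_Un_disjoint) (auto simp: finite_nbhd)
  ultimately have "card (nbhd E w \<inter> C) = card (nbhd E w \<inter> C_high) + card (nbhd E w \<inter> (C - C_high))"
    by simp
  then have split: "degree E w = card (nbhd E w \<inter> C_high) + card (nbhd E w \<inter> (C - C_high))
                                 + card (nbhd E w \<inter> W)"
    using degree_C_W by simp
  have inner: "card (nbhd E w \<inter> W) \<le> m - 2" using W_to_W_le[OF w] card_W D by simp
  consider "nbhd E w \<inter> C_high = {}" | "degree E w \<le> 3"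
    | v where "v \<in> C_high" "w \<in> nbhd E v" "4 \<le> degree E w"
    using nbhd_sym by fastforce
  then show ?thesis
  proof cases
    case 1 then show ?thesis using split inner by simp
  next
    case 2 then show ?thesis using m_ge by simp
  next
    case 3
    then show ?thesis using W_next_to_high[OF D _ w] split m_ge by fastforce
  qed
qed

text \<open>Case \<open>D = m + 1\<close>: the few edges between \<open>W\<close> and \<open>C_high\<close> compensate the excess degree
  of the vertices of \<open>W\<close>.\<close>

lemma degree_sum_D_m1:
  assumes D: "D = m + 1"
  shows "(\<Sum>v\<in>V. degree E v) \<le> 2 * m * m + 12"
proof -
  let ?low = "C - C_high"
  have sub: "C_high \<subseteq> V" "?low \<subseteq> V" using C_subset by (auto simp: C_high_def)
  have "(\<Sum>w\<in>W. degree E w) \<le> (\<Sum>w\<in>W. (m - 2) + card (nbhd E w \<inter> ?low)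
                                    + (card (nbhd E w \<inter> C_high) - (m - 4)))"
    using W_vertex_D_m1[OF D] by (intro sum_mono) auto
  also have "\<dots> \<le> card W * (m - 2) + (\<Sum>w\<in>W. card (nbhd E w \<inter> ?low))
                   + ((\<Sum>w\<in>W. card (nbhd E w \<inter> C_high)) - (m - 4))"
    using sum_diff_le[where F=W and k="m - 4"] by (simp add: sum.distrib)
  finally have sum_W: "(\<Sum>w\<in>W. degree E w) \<le> card W * (m - 2) + (\<Sum>v\<in>?low. card (nbhd E v \<inter> W))
                          + ((\<Sum>v\<in>C_high. card (nbhd E v \<inter> W)) - (m - 4))"
    using W_count[OF sub(1)] W_count[OF sub(2)] by simp
  have "(\<Sum>v\<in>C_high. card (nbhd E v \<inter> W)) \<le> card C_high"
    using sum_bounded_above[of C_high "\<lambda>v. card (nbhd E v \<inter> W)" 1] high_to_W[OF D] by simp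
  also have "\<dots> \<le> m + 2" using card_mono[OF finite_C, of C_high] card_C D by (auto simp: C_high_def)
  finally have high: "(\<Sum>v\<in>C_high. card (nbhd E v \<inter> W)) - (m - 4) \<le> 6" by linarith
  have "(\<Sum>v\<in>C. degree E v + (if v \<in> C_high then 0 else card (nbhd E v \<inter> W))) \<le> card C * (m + 1)"
    using sum_bounded_above[of C "\<lambda>v. degree E v + (if v \<in> C_high then 0 else card (nbhd E v \<inter> W))"
        "m + 1"] C_vertex_D_m1[OF D] by simp
  moreover have "(\<Sum>v\<in>C. if v \<in> C_high then 0 else card (nbhd E v \<inter> W))
                   = (\<Sum>v\<in>?low. card (nbhd E v \<inter> W))"
    using finite_C by (simp add: sum.If_cases Diff_eq)
  ultimately have sum_C: "(\<Sum>v\<in>C. degree E v) + (\<Sum>v\<in>?low. card (nbhd E v \<inter> W)) \<le> (m + 2) * (m + 1)"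
    using card_C D by (simp add: sum.distrib)
  have "card W * (m - 2) = (m - 1) * (m - 2)" using card_W D by simp
  moreover have "(m + 2) * (m + 1) + (m - 1) * (m - 2) + 6 \<le> 2 * m * m + 12"
  proof -
    obtain k where "m = k + 6" using m_ge by (metis add.commute le_iff_add)
    then show ?thesis by (simp add: algebra_simps)
  qed
  ultimately show ?thesis using sum_V sum_W high sum_C by linarith
qed

definition loose :: "'a set" where
  "loose = {w \<in> W. m \<le> degree E w \<and> card (nbhd E w \<inter> C) \<le> m - 5}"

definition anchored :: "'a set" where
  "anchored = {w \<in> W. m - 4 \<le> card (nbhd E w \<inter> C)}"

lemma C_to_W_D_m:
  assumes D: "D = m" and v: "v \<in> C"
  shows "card (nbhd E v \<inter> W) \<le> 2"
proof (cases "v = u")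
  case True then show ?thesis using u_to_W by simp
next
  case False
  then have "v \<in> nbhd E u" using v by (simp add: C_def)
  then show ?thesis using nbhd_to_W_bound[of v] nbhd_to_W_le[of v] D by fastforce
qed

lemma W_vertex_D_m:
  assumes D: "D = m" and w: "w \<in> W"
  shows "degree E w \<le> (m - 1) + (if w \<in> loose then 1 else 0) + (if w \<in> anchored then 1 else 0)"
proof -
  have "degree E w \<le> m" using u_max w W_subset D by auto
  then show ?thesis using w by (auto simp: loose_def anchored_def)
qed

text \<open>The vertices of \<open>W\<close> receive at most \<open>2D\<close> edges from \<open>C\<close>, so few are anchored.\<close>

lemma card_anchored:
  assumes D: "D = m"
  shows "card anchored \<le> 12"
proof -
  have sub: "anchored \<subseteq> W" by (auto simp: anchored_def)
  have "card anchored * (m - 4) \<le> (\<Sum>w\<in>anchored. card (nbhd E w \<inter> C))"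
    using sum_bounded_below[of anchored "m - 4" "\<lambda>w. card (nbhd E w \<inter> C)"]
    by (simp add: anchored_def)
  also have "\<dots> \<le> (\<Sum>w\<in>W. card (nbhd E w \<inter> C))"
    using sub finite_W by (intro sum_mono2) auto
  also have "\<dots> = (\<Sum>v\<in>nbhd E u. card (nbhd E v \<inter> W))"
    using W_count[OF C_subset] sum_C[of "\<lambda>v. card (nbhd E v \<inter> W)"] u_to_W by simp
  also have "\<dots> \<le> D * 2"
    using sum_bounded_above[of "nbhd E u" "\<lambda>v. card (nbhd E v \<inter> W)" 2] C_to_W_D_m[OF D]
    by (simp add: C_def)
  finally have bound: "card anchored * (m - 4) \<le> 2 * m" using D by simp
  show ?thesis
  proof (rule ccontr)
    assume "\<not> card anchored \<le> 12"
    then have "13 * (m - 4) \<le> card anchored * (m - 4)" by (intro mult_le_mono1) simp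
    then show False using bound m_ge by linarith
  qed
qed

text \<open>A neighbour \<open>v \<in> C\<close> of a loose vertex \<open>w\<close> has small degree: by the local bound at
  \<open>wv\<close>, almost all of \<open>N(v) \<inter> C\<close> lies in \<open>N(w) \<inter> C\<close>, which is small.\<close>

lemma C_vertex_D_m:
  assumes D: "D = m" and v: "v \<in> C"
  shows "degree E v + card (nbhd E v \<inter> loose) \<le> m"
proof (cases "nbhd E v \<inter> loose = {}")
  case True then show ?thesis using degree_le_D[OF v] D by simp
next
  case False
  then obtain w where w: "w \<in> nbhd E v" "w \<in> loose" by blast
  then have "w \<in> W" "m \<le> degree E w" and wC: "card (nbhd E w \<inter> C) \<le> m - 5"
    by (auto simp: loose_def)
  have to_loose: "card (nbhd E v \<inter> loose) \<le> 2"
    using C_to_W_D_m[OF D v] card_mono[of "nbhd E v \<inter> W" "nbhd E v \<inter> loose"] finite_nbhd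
    by (fastforce simp: loose_def)
  show ?thesis
  proof (cases "4 \<le> degree E v")
    case False then show ?thesis using to_loose m_ge by linarith
  next
    case True
    have "{w, v} \<in> E" using w(1) by (simp add: nbhd_def insert_commute)
    then have "card (nbhd E v - nbhd E w - {w}) \<le> 2"
      using local_bound[of w v] \<open>m \<le> degree E w\<close> True by simp
    moreover have "v \<in> nbhd E w \<inter> C" using w(1) v by (simp add: nbhd_sym)
    then have "card (nbhd E w \<inter> C - {v}) \<le> m - 6" using wC finite_nbhd by simp
    moreover have "nbhd E v \<inter> C \<subseteq> (nbhd E v - nbhd E w - {w}) \<union> (nbhd E w \<inter> C - {v})"
      using \<open>w \<in> W\<close> not_in_nbhd[of v] by (auto simp: W_def)
    then have "card (nbhd E v \<inter> C)
                 \<le> card ((nbhd E v - nbhd E w - {w}) \<union> (nbhd E w \<inter> C - {v}))"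
      by (rule card_mono[rotated]) (simp add: finite_nbhd)
    then have "card (nbhd E v \<inter> C)
                 \<le> card (nbhd E v - nbhd E w - {w}) + card (nbhd E w \<inter> C - {v})"
      using card_Un_le le_trans by blast
    ultimately have "card (nbhd E v \<inter> C) \<le> m - 4" using m_ge by linarith
    then show ?thesis using degree_C_W[of v] C_to_W_D_m[OF D v] to_loose m_ge by linarith
  qed
qed

text \<open>A loose vertex has at most \<open>m - 1\<close> neighbours in \<open>W\<close>, hence one in \<open>C\<close>.\<close>

lemma loose_to_C:
  assumes D: "D = m" and w: "w \<in> loose"
  shows "1 \<le> card (nbhd E w \<inter> C)"
proof -
  have "w \<in> W" "m \<le> degree E w" using w by (auto simp: loose_def)
  then show ?thesis using degree_C_W[of w] W_to_W_le card_W D m_ge by fastforce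
qed

text \<open>Case \<open>D = m\<close>: each loose vertex is paid for by a missing degree in \<open>C\<close>, and there
  are at most 12 anchored vertices.\<close>

lemma degree_sum_D_m:
  assumes D: "D = m"
  shows "(\<Sum>v\<in>V. degree E v) \<le> 2 * m * m + 12"
proof -
  have sub: "loose \<subseteq> W" "anchored \<subseteq> W" by (auto simp: loose_def anchored_def)
  have "(\<Sum>w\<in>W. degree E w) \<le> (\<Sum>w\<in>W. (m - 1) + (if w \<in> loose then 1 else 0)
                                    + (if w \<in> anchored then 1 else 0))"
    using W_vertex_D_m[OF D] by (intro sum_mono) auto
  also have "\<dots> = card W * (m - 1) + card loose + card anchored"
    using finite_W sub by (simp add: sum.distrib sum.If_cases Int_absorb1 Int_absorb2)
  finally have sum_W: "(\<Sum>w\<in>W. degree E w) \<le> m * (m - 1) + card loose + 12"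
    using card_W card_anchored[OF D] D by simp
  have "(\<Sum>v\<in>C. degree E v + card (nbhd E v \<inter> loose)) \<le> card C * m"
    using sum_bounded_above[of C "\<lambda>v. degree E v + card (nbhd E v \<inter> loose)" m]
      C_vertex_D_m[OF D] by simp
  moreover have "(\<Sum>v\<in>C. card (nbhd E v \<inter> loose)) = (\<Sum>w\<in>loose. card (nbhd E w \<inter> C))"
    using cross_edges_sym[OF C_subset] sub W_subset by auto
  moreover have "card loose \<le> (\<Sum>w\<in>loose. card (nbhd E w \<inter> C))"
    using sum_bounded_below[of loose 1 "\<lambda>w. card (nbhd E w \<inter> C)"] loose_to_C[OF D] by simp
  ultimately have "(\<Sum>v\<in>C. degree E v) + card loose \<le> (m + 1) * m"
    using card_C D by (simp add: sum.distrib)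
  moreover have "(m + 1) * m + m * (m - 1) = 2 * m * m"
    using m_ge by (cases m) (simp_all add: algebra_simps)
  ultimately show ?thesis using sum_V sum_W by linarith
qed

end

lemma (in local_bound_graph) degree_sum_bound: "(\<Sum>v\<in>V. degree E v) \<le> 2 * m * m + 12"
proof -
  have "V \<noteq> {}" using card_V by auto
  then have "Max (degree E ` V) \<in> degree E ` V" using finite_V by simp
  then obtain u where u: "u \<in> V" "Max (degree E ` V) = degree E u" by (rule imageE)
  have u_max: "degree E z \<le> degree E u" if "z \<in> V" for z
    using that finite_V u(2) by (metis Max_ge finite_imageI imageI)
  interpret max_degree_vertex V E m u
    by (intro max_degree_vertex.intro local_bound_graph_axioms max_degree_vertex_axioms.intro u u_max)
  consider "degree E u \<le> m - 1" | "degree E u = m" | "degree E u = m + 1" | "degree E u = m + 2"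
    | "m + 3 \<le> degree E u" by linarith
  then show ?thesis
  proof cases
    case 1
    then have "degree E v \<le> m - 1" if "v \<in> V" for v using u_max[OF that] by linarith
    then have "(\<Sum>v\<in>V. degree E v) \<le> card V * (m - 1)"
      using sum_bounded_above[of V "degree E" "m - 1"] by simp
    also have "\<dots> = (2 * m + 1) * (m - 1)" using card_V by simp
    also have "\<dots> \<le> 2 * m * m + 12" by (simp add: diff_mult_distrib2)
    finally show ?thesis .
  next
    case 2 then show ?thesis by (rule degree_sum_D_m)
  next
    case 3 then show ?thesis by (rule degree_sum_D_m1)
  next
    case 4 then show ?thesis by (rule degree_sum_D_m2)
  next
    case 5 then show ?thesis by (rule degree_sum_D_large)
  qed
qed

lemma T3_free_edge_bound:
  assumes n: "10 \<le> n" and simple: "simple_graph V E" and card_V: "card V = 2 * n - 7"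
    and free: "\<not> contains_copy {0..<n} (T3_edges n) V E"
  shows "card E \<le> (n - 4) * (n - 4) + 6"
proof -
  interpret graph V E by (rule graph.intro[OF simple])
  interpret local_bound_graph V E "n - 4"
  proof (unfold_locales)
    show "card V = 2 * (n - 4) + 1" "6 \<le> n - 4" using card_V n by simp_all
  next
    fix u v assume "{u, v} \<in> E" "n - 4 \<le> degree E u" "4 \<le> degree E v"
    then show "degree E u + card (nbhd E v - nbhd E u - {u}) \<le> n - 4 + 2"
      using T3_free_local_bound[of n u v] n free by simp
  qed
  show ?thesis using degree_sum_bound degree_sum by simp
qed

text \<open>Lower bound: disjoint cliques, each with fewer than \<open>n\<close> vertices, contain no copy of the
  connected tree \<open>T\<^sub>n\<^sup>3\<close>.\<close>

definition clique_edges :: "'a set \<Rightarrow> 'a set set" where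
  "clique_edges A = {e. e \<subseteq> A \<and> card e = 2}"

lemma finite_clique_edges: "finite A \<Longrightarrow> finite (clique_edges A)"
  by (rule finite_subset[of _ "Pow A"]) (auto simp: clique_edges_def)

lemma clique_edges_disjoint:
  assumes "A \<inter> B = {}"
  shows "clique_edges A \<inter> clique_edges B = {}"
proof -
  have "e \<notin> clique_edges B" if "e \<in> clique_edges A" for e
  proof
    assume "e \<in> clique_edges B"
    then have "e = {}" using that assms by (auto simp: clique_edges_def)
    then show False using that by (simp add: clique_edges_def)
  qed
  then show ?thesis by blast
qed

lemma card_clique_edges: "finite A \<Longrightarrow> card (clique_edges A) = card A choose 2"
  unfolding clique_edges_def by (rule n_subsets)

lemma T3_edge_01: "6 \<le> n \<Longrightarrow> {0, 1} \<in> T3_edges n"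
  unfolding T3_edges_def by force

lemma T3_radius_two:
  assumes "i < n"
  shows "i = 0 \<or> {0, i} \<in> T3_edges n \<or> {1, i} \<in> T3_edges n"
proof -
  have "i = 0 \<or> (1 \<le> i \<and> i \<le> n - 4) \<or> i = n - 3 \<or> i = n - 2 \<or> i = n - 1"
    using assms by linarith
  then consider "i = 0" | "1 \<le> i \<and> i \<le> n - 4" | "i \<in> {n - 3, n - 2, n - 1}" by blast
  then show ?thesis
  proof cases
    case 2 then have "{0, i} \<in> T3_edges n" unfolding T3_edges_def by blast
    then show ?thesis by simp
  next
    case 3 then have "{1, i} \<in> T3_edges n" unfolding T3_edges_def by blast
    then show ?thesis by simp
  qed simp
qed

lemma disjoint_cliques_T3_free:
  assumes n: "6 \<le> n" and disj: "A \<inter> B = {}" and fin: "finite A" "finite B"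
    and small: "card A < n" "card B < n"
  shows "\<not> contains_copy {0..<n} (T3_edges n) V (clique_edges A \<union> clique_edges B)"
proof
  assume "contains_copy {0..<n} (T3_edges n) V (clique_edges A \<union> clique_edges B)"
  then obtain f where inj: "inj_on f {0..<n}"
    and edges: "\<And>e. e \<in> T3_edges n \<Longrightarrow> f ` e \<in> clique_edges A \<union> clique_edges B"
    unfolding contains_copy_def by blast
  have same_side: "f a \<in> A \<and> f b \<in> A \<or> f a \<in> B \<and> f b \<in> B" if "{a, b} \<in> T3_edges n" for a b
    using edges[OF that] by (auto simp: clique_edges_def)
  have side01: "f 0 \<in> A \<and> f 1 \<in> A \<or> f 0 \<in> B \<and> f 1 \<in> B"
    using same_side[OF T3_edge_01[OF n]] .
  have side: "f i \<in> A \<and> f 0 \<in> A \<or> f i \<in> B \<and> f 0 \<in> B" if "i < n" for i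
    using T3_radius_two[OF that]
  proof (elim disjE)
    assume "i = 0" then show ?thesis using side01 by blast
  next
    assume "{0, i} \<in> T3_edges n" then show ?thesis using same_side by blast
  next
    assume "{1, i} \<in> T3_edges n" then show ?thesis using same_side[of 1 i] side01 disj by blast
  qed
  have "f ` {0..<n} \<subseteq> A \<or> f ` {0..<n} \<subseteq> B"
  proof (cases "f 0 \<in> A")
    case True then show ?thesis using side disj by fastforce
  next
    case False then show ?thesis using side by fastforce
  qed
  then have "card (f ` {0..<n}) < n"
    using card_mono[OF fin(1)] card_mono[OF fin(2)] small le_less_trans by blast
  then show False using card_image[OF inj] by simp
qed

lemma double_choose_two: "2 * (x choose 2) = x * (x - 1)"
proof -
  have "even (x * (x - 1))" by (cases "even x") auto
  then show ?thesis by (simp add: choose_two)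
qed

definition two_cliques :: "nat \<Rightarrow> nat set set" where
  "two_cliques n = clique_edges {0..<n - 1} \<union> clique_edges {n - 1..<2 * n - 7}"

lemma two_cliques_extremal:
  assumes n: "10 \<le> n"
  shows "simple_graph {0..<2 * n - 7} (two_cliques n)"
    and "\<not> contains_copy {0..<n} (T3_edges n) {0..<2 * n - 7} (two_cliques n)"
    and "card (two_cliques n) = (n - 4) * (n - 4) + 6"
proof -
  have disj: "{0..<n - 1} \<inter> {n - 1..<2 * n - 7} = {}" by auto
  show "simple_graph {0..<2 * n - 7} (two_cliques n)"
    using n by (auto simp: simple_graph_def two_cliques_def clique_edges_def)
  show "\<not> contains_copy {0..<n} (T3_edges n) {0..<2 * n - 7} (two_cliques n)"
    unfolding two_cliques_def by (rule disjoint_cliques_T3_free[OF _ disj]) (use n in auto)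
  have "card (two_cliques n) = card (clique_edges {0..<n - 1}) + card (clique_edges {n - 1..<2 * n - 7})"
    unfolding two_cliques_def
    by (intro card_Un_disjoint finite_clique_edges clique_edges_disjoint[OF disj]) simp_all
  also have "\<dots> = (n - 1 choose 2) + (n - 6 choose 2)" using n by (simp add: card_clique_edges)
  finally have card: "card (two_cliques n) = (n - 1 choose 2) + (n - 6 choose 2)" .
  obtain k where k: "n = k + 10" using n by (metis add.commute le_iff_add)
  have "2 * card (two_cliques n) = (k + 9) * (k + 8) + (k + 4) * (k + 3)"
    using card double_choose_two[of "k + 9"] double_choose_two[of "k + 4"] by (simp add: k algebra_simps)
  then show "card (two_cliques n) = (n - 4) * (n - 4) + 6"
    by (simp add: k algebra_simps)
qed

theorem lemma4p5:
  fixes n :: nat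
  assumes "n \<ge> 10"
  shows "int (ex_num (2 * n - 7) {0..<n} (T3_edges n)) = int n ^ 2 - 8 * int n + 22"
proof -
  let ?S = "{card E | E. simple_graph {0..<2 * n - 7} E
                         \<and> \<not> contains_copy {0..<n} (T3_edges n) {0..<2 * n - 7} E}"
  have "?S \<subseteq> card ` Pow (Pow {0..<2 * n - 7})" by (auto simp: simple_graph_def)
  then have fin: "finite ?S" by (rule finite_subset) simp
  have "Max ?S = (n - 4) * (n - 4) + 6"
  proof (rule Max_eqI[OF fin])
    fix k assume "k \<in> ?S"
    then show "k \<le> (n - 4) * (n - 4) + 6" using T3_free_edge_bound[OF assms] by fastforce
  next
    show "(n - 4) * (n - 4) + 6 \<in> ?S"
      using two_cliques_extremal[OF assms] by (auto intro!: exI[of _ "two_cliques n"])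
  qed
  moreover obtain k where "n = k + 10" using assms by (metis add.commute le_iff_add)
  ultimately show ?thesis unfolding ex_num_def by (simp add: power2_eq_square algebra_simps)
qed

end
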